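(* Let $G$ be a graph on $\{x_1,\dots,x_n\}$ such that the edge ideal $I=I(G)\subset S$ has linear quotients, and let $P\subset S$ be a monomial prime ideal (an ideal generated by a subset of the variables). Then $PI$ has linear quotients.
   Context: $S=K[x_1,\dots,x_n]$, $I(G)=(x_ix_j:\{x_i,x_j\}\in E(G))$. A monomial ideal $J$ has linear quotients if its minimal monomial generators can be ordered $u_1,\dots,u_s$ such that for each $i=2,\dots,s$ the colon ideal $(u_1,\dots,u_{i-1}):(u_i)$ is generated by variables. *)

theory Defs
  imports Main
begin

text \<open>Monomials of S = K[x_v : v in 'v] ('v a finite type of variables) are
  represented by their exponent vectors 'v => nat; the product of monomials is
  pointwise addition. A monomial ideal is represented by the set of monomials
  it contains (a monomial ideal is determined by, and K-spanned by, these).\<close>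

type_synonym 'v monomial = "'v \<Rightarrow> nat"

definition mvar :: "'v \<Rightarrow> 'v monomial" where
  "mvar v = (\<lambda>w. if w = v then 1 else 0)"

definition mmult :: "'v monomial \<Rightarrow> 'v monomial \<Rightarrow> 'v monomial" where
  "mmult u w = (\<lambda>v. u v + w v)"

definition mdvd :: "'v monomial \<Rightarrow> 'v monomial \<Rightarrow> bool" where
  "mdvd u m \<longleftrightarrow> (\<forall>v. u v \<le> m v)"

definition mideal :: "'v monomial set \<Rightarrow> 'v monomial set" where
  "mideal U = {m. \<exists>u\<in>U. mdvd u m}"

definition mingens :: "'v monomial set \<Rightarrow> 'v monomial set" where
  "mingens J = {m \<in> J. \<forall>m'\<in>J. mdvd m' m \<longrightarrow> m' = m}"

definition mcolon :: "'v monomial set \<Rightarrow> 'v monomial \<Rightarrow> 'v monomial set" where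
  "mcolon J u = {m. mmult m u \<in> J}"

definition mprod :: "'v monomial set \<Rightarrow> 'v monomial set \<Rightarrow> 'v monomial set" where
  "mprod J L = mideal {mmult a b | a b. a \<in> J \<and> b \<in> L}"

definition gen_by_vars :: "'v monomial set \<Rightarrow> bool" where
  "gen_by_vars J \<longleftrightarrow> (\<exists>A. J = mideal (mvar ` A))"

definition linear_quotients :: "'v monomial set \<Rightarrow> bool" where
  "linear_quotients J \<longleftrightarrow>
     (\<exists>us. distinct us \<and> set us = mingens J \<and>
        (\<forall>i. 0 < i \<and> i < length us \<longrightarrow>
             gen_by_vars (mcolon (mideal (set (take i us))) (us ! i))))"

definition edge_ideal :: "('v \<Rightarrow> 'v \<Rightarrow> bool) \<Rightarrow> 'v monomial set" where
  "edge_ideal E = mideal {mmult (mvar i) (mvar j) | i j. E i j}"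

end

theory Submission
  imports Defs
begin

text \<open>A colon ideal (u_1, ..., u_(i-1)) : u_i of monomial ideals is generated by variables
  iff every u_j, j < i, admits a variable x_t dividing u_j / gcd(u_j, u_i) with x_t u_i in
  (u_1, ..., u_(i-1)). Let u_1, ..., u_s be an order of the edges with linear quotients. The
  minimal generators of P I are the cubics x_a u_k with x_a in P; list them by the least k for
  which they have this form. For g = x_a u_k and an earlier g' = x_b u_l (so l \<le> k) the
  witness is x_b if l = k. Otherwise take the witness x_t0 of u_l against u_k, so that u_l'
  divides x_t0 u_k for some l' < k: as all u_i are quadratic, one of x_t0, x_b, or the
  variable of g' missing from g is a witness for g' against g.\<close>

lemma mmult_apply [simp]: "mmult u w v = u v + w v"
  by (simp add: mmult_def)

lemma mvar_apply [simp]: "mvar v w = (if w = v then 1 else 0)"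
  by (simp add: mvar_def)

lemma mmult_commute: "mmult u w = mmult w u"
  by (simp add: mmult_def add.commute)

lemma mdvd_refl [simp]: "mdvd u u"
  by (simp add: mdvd_def)

lemma mdvd_trans: "mdvd u w \<Longrightarrow> mdvd w m \<Longrightarrow> mdvd u m"
  unfolding mdvd_def using order_trans by blast

lemma mdvd_antisym: "mdvd u w \<Longrightarrow> mdvd w u \<Longrightarrow> u = w"
  unfolding mdvd_def by (simp add: antisym fun_eq_iff)

lemma mdvd_mvar_iff: "mdvd (mvar t) m \<longleftrightarrow> 0 < m t"
  by (auto simp: mdvd_def)

lemma mdvd_mmult_mono: "mdvd u m \<Longrightarrow> mdvd w m' \<Longrightarrow> mdvd (mmult u w) (mmult m m')"
  by (simp add: mdvd_def add_mono)

lemma mem_mideal_iff: "m \<in> mideal U \<longleftrightarrow> (\<exists>u\<in>U. mdvd u m)"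
  by (simp add: mideal_def)

lemma generator_in_mideal: "u \<in> U \<Longrightarrow> u \<in> mideal U"
  unfolding mem_mideal_iff using mdvd_refl by blast

lemma mideal_upward_closed: "u \<in> mideal U \<Longrightarrow> mdvd u m \<Longrightarrow> m \<in> mideal U"
  by (meson mdvd_trans mem_mideal_iff)

definition mdeg :: "'v::finite monomial \<Rightarrow> nat" where
  "mdeg m = (\<Sum>v\<in>UNIV. m v)"

lemma mdeg_mvar [simp]: "mdeg (mvar v) = 1"
  by (simp add: mdeg_def)

lemma mdeg_mmult [simp]: "mdeg (mmult u w) = mdeg u + mdeg w"
  by (simp add: mdeg_def sum.distrib)

lemma mdvd_mdeg_eq_imp_eq:
  assumes "mdvd u m" "mdeg u = mdeg m"
  shows "u = m"
proof (rule ccontr)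
  assume "u \<noteq> m"
  with assms(1) obtain v where "u v < m v"
    unfolding mdvd_def by (metis ext le_neq_implies_less)
  with assms(1) have "mdeg u < mdeg m"
    unfolding mdeg_def mdvd_def by (intro sum_strict_mono_ex1) auto
  with assms(2) show False by simp
qed

lemma mingens_mideal_antichain:
  assumes "\<And>g g'. g \<in> G \<Longrightarrow> g' \<in> G \<Longrightarrow> mdvd g g' \<Longrightarrow> g = g'"
  shows "mingens (mideal G) = G"
proof (intro equalityI subsetI)
  fix m assume "m \<in> mingens (mideal G)"
  then have "m \<in> mideal G" and min: "\<And>m'. m' \<in> mideal G \<Longrightarrow> mdvd m' m \<Longrightarrow> m' = m"
    unfolding mingens_def by auto
  then obtain g where "g \<in> G" "mdvd g m" by (auto simp: mem_mideal_iff)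
  with min show "m \<in> G" by (metis generator_in_mideal)
next
  fix g assume "g \<in> G"
  have "m' = g" if m': "m' \<in> mideal G" "mdvd m' g" for m'
  proof -
    obtain g' where "g' \<in> G" "mdvd g' m'" using m'(1) unfolding mem_mideal_iff by blast
    with \<open>g \<in> G\<close> m'(2) have "g' = g" by (metis assms mdvd_trans)
    with \<open>mdvd g' m'\<close> m'(2) show ?thesis by (simp add: mdvd_antisym)
  qed
  with \<open>g \<in> G\<close> show "g \<in> mingens (mideal G)"
    unfolding mingens_def by (auto intro: generator_in_mideal)
qed

lemma mingens_mideal_homogeneous:
  assumes "\<And>g. g \<in> G \<Longrightarrow> mdeg g = d"
  shows "mingens (mideal G) = G"
  by (rule mingens_mideal_antichain) (metis assms mdvd_mdeg_eq_imp_eq)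

lemma mprod_mideal:
  "mprod (mideal U) (mideal W) = mideal {mmult u w | u w. u \<in> U \<and> w \<in> W}"
proof (intro equalityI subsetI)
  fix m assume "m \<in> mprod (mideal U) (mideal W)"
  then obtain x y u w where "u \<in> U" "mdvd u x" "w \<in> W" "mdvd w y" "mdvd (mmult x y) m"
    unfolding mprod_def by (auto simp: mem_mideal_iff)
  then show "m \<in> mideal {mmult u w | u w. u \<in> U \<and> w \<in> W}"
    unfolding mem_mideal_iff by (blast intro: mdvd_trans mdvd_mmult_mono)
next
  fix m assume "m \<in> mideal {mmult u w | u w. u \<in> U \<and> w \<in> W}"
  then obtain u w where "u \<in> U" "w \<in> W" "mdvd (mmult u w) m"
    unfolding mem_mideal_iff by blast
  then show "m \<in> mprod (mideal U) (mideal W)"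
    unfolding mprod_def mem_mideal_iff by (blast intro: mdvd_refl)
qed

lemma gen_by_vars_mcolon_iff:
  "gen_by_vars (mcolon (mideal U) g) \<longleftrightarrow>
     (\<forall>u\<in>U. \<exists>t. g t < u t \<and> mmult (mvar t) g \<in> mideal U)"
proof
  assume "gen_by_vars (mcolon (mideal U) g)"
  then obtain V where V: "mcolon (mideal U) g = mideal (mvar ` V)"
    unfolding gen_by_vars_def by blast
  show "\<forall>u\<in>U. \<exists>t. g t < u t \<and> mmult (mvar t) g \<in> mideal U"
  proof
    fix u assume "u \<in> U"
    \<comment> \<open>the quotient u / gcd(u, g) lies in the colon ideal\<close>
    define w where "w v = u v - g v" for v
    have "mdvd u (mmult w g)" by (auto simp: mdvd_def w_def)
    with \<open>u \<in> U\<close> have "w \<in> mideal (mvar ` V)"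
      unfolding V[symmetric] mcolon_def by (auto simp: mem_mideal_iff)
    then obtain t where "t \<in> V" "0 < w t" by (auto simp: mem_mideal_iff mdvd_mvar_iff)
    moreover have "mvar t \<in> mcolon (mideal U) g"
      using \<open>t \<in> V\<close> V by (simp add: generator_in_mideal)
    ultimately show "\<exists>t. g t < u t \<and> mmult (mvar t) g \<in> mideal U"
      by (auto simp: w_def mcolon_def)
  qed
next
  assume witness: "\<forall>u\<in>U. \<exists>t. g t < u t \<and> mmult (mvar t) g \<in> mideal U"
  define V where "V = {t. mmult (mvar t) g \<in> mideal U}"
  have "mcolon (mideal U) g = mideal (mvar ` V)"
  proof (intro equalityI subsetI)
    fix m assume "m \<in> mcolon (mideal U) g"
    then obtain u where "u \<in> U" "mdvd u (mmult m g)" by (auto simp: mcolon_def mem_mideal_iff)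
    moreover obtain t where "g t < u t" "t \<in> V" using witness \<open>u \<in> U\<close> V_def by blast
    ultimately have "u t \<le> m t + g t" "g t < u t" by (auto simp: mdvd_def)
    then have "0 < m t" by linarith
    with \<open>t \<in> V\<close> show "m \<in> mideal (mvar ` V)" by (auto simp: mem_mideal_iff mdvd_mvar_iff)
  next
    fix m assume "m \<in> mideal (mvar ` V)"
    then obtain t where "t \<in> V" "mdvd (mvar t) m" by (auto simp: mem_mideal_iff)
    then show "m \<in> mcolon (mideal U) g"
      unfolding V_def mcolon_def by (blast intro: mideal_upward_closed mdvd_mmult_mono mdvd_refl)
  qed
  then show "gen_by_vars (mcolon (mideal U) g)" unfolding gen_by_vars_def by blast
qed

definition linear_quotient_order :: "'v monomial list \<Rightarrow> bool" where
  "linear_quotient_order us \<longleftrightarrow>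
     (\<forall>i < length us. \<forall>j < i. \<exists>t. (us ! i) t < (us ! j) t \<and>
        mmult (mvar t) (us ! i) \<in> mideal (set (take i us)))"

lemma linear_quotients_iff:
  "linear_quotients J \<longleftrightarrow>
     (\<exists>us. distinct us \<and> set us = mingens J \<and> linear_quotient_order us)"
proof -
  have "gen_by_vars (mcolon (mideal (set (take i us))) (us ! i)) \<longleftrightarrow>
      (\<forall>j < i. \<exists>t. (us ! i) t < (us ! j) t \<and>
         mmult (mvar t) (us ! i) \<in> mideal (set (take i us)))"
    if "i < length us" for us :: "'a monomial list" and i
    using that by (auto simp: gen_by_vars_mcolon_iff all_set_conv_all_nth)
  then have "(\<forall>i. 0 < i \<and> i < length us \<longrightarrow>
        gen_by_vars (mcolon (mideal (set (take i us))) (us ! i))) \<longleftrightarrow>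
      linear_quotient_order us" for us :: "'a monomial list"
    unfolding linear_quotient_order_def by (metis bot_nat_0.not_eq_extremum less_nat_zero_code)
  then show ?thesis
    unfolding linear_quotients_def by simp
qed

lemma sorted_key_in_set_take:
  assumes "sorted (map f xs)" "h \<in> set xs" "i < length xs" "f h < f (xs ! i)"
  shows "h \<in> set (take i xs)"
proof -
  obtain j where "j < length xs" "xs ! j = h" using assms(2) by (auto simp: in_set_conv_nth)
  moreover have "j < i"
    using sorted_nth_mono[OF assms(1), of i j] assms(3,4) \<open>xs ! j = h\<close> \<open>j < length xs\<close>
    by fastforce
  ultimately show ?thesis by (auto simp: in_set_conv_nth)
qed

lemma var_times_quadratic_witness:
  fixes p q c d a b t\<^sub>0 :: 'v
  defines "e \<equiv> mmult (mvar p) (mvar q)" and "e' \<equiv> mmult (mvar c) (mvar d)"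
  assumes "e t\<^sub>0 < e' t\<^sub>0" and "mdvd h (mmult (mvar t\<^sub>0) e)"
    and "mmult (mvar a) e \<noteq> mmult (mvar b) e'"
    and "mmult (mvar b) e' \<in> U" "mmult (mvar a) h \<in> U" "mmult (mvar b) h \<in> U"
  shows "\<exists>t. mmult (mvar a) e t < mmult (mvar b) e' t \<and>
           mmult (mvar t) (mmult (mvar a) e) \<in> mideal U"
proof -
  consider "t\<^sub>0 \<noteq> a \<or> b = a" | "t\<^sub>0 = a" "b \<noteq> a" "b \<noteq> p" "b \<noteq> q"
    | "t\<^sub>0 = a" "b \<noteq> a" "b = p \<or> b = q"
    by blast
  then show ?thesis
  proof cases
    case 1
    then have "mmult (mvar a) e t\<^sub>0 < mmult (mvar b) e' t\<^sub>0"
      using assms(3) by auto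
    moreover have "mdvd (mmult (mvar a) h) (mmult (mvar t\<^sub>0) (mmult (mvar a) e))"
      using assms(4) by (auto simp: mdvd_def)
    ultimately show ?thesis
      using assms(7) by (blast intro: mideal_upward_closed generator_in_mideal)
  next
    case 2
    then have "mmult (mvar a) e b < mmult (mvar b) e' b"
      by (simp add: e_def)
    moreover have "mdvd (mmult (mvar b) h) (mmult (mvar b) (mmult (mvar a) e))"
      using assms(4) \<open>t\<^sub>0 = a\<close> by (auto simp: mdvd_def)
    ultimately show ?thesis
      using assms(8) by (blast intro: mideal_upward_closed generator_in_mideal)
  next
    case 3
    \<comment> \<open>x_a e and x_b e' share the factor x_a x_b, so they differ in one variable only\<close>
    obtain q' where q': "e = mmult (mvar b) (mvar q')"
      using 3(3) unfolding e_def by (metis mmult_commute)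
    have "a = c \<or> a = d"
      using assms(3) 3(1) unfolding e'_def by (auto split: if_splits)
    then obtain d' where d': "e' = mmult (mvar a) (mvar d')"
      unfolding e'_def by (metis mmult_commute)
    have "d' \<noteq> q'"
      using assms(5) q' d' by (auto simp: mmult_def fun_eq_iff)
    then have "mmult (mvar a) e d' < mmult (mvar b) e' d'"
      using q' d' by simp
    moreover have "mdvd (mmult (mvar b) e') (mmult (mvar d') (mmult (mvar a) e))"
      using q' d' by (simp add: mdvd_def)
    ultimately show ?thesis
      using assms(6) by (blast intro: mideal_upward_closed generator_in_mideal)
  qed
qed

definition quadratic :: "'v monomial \<Rightarrow> bool" where
  "quadratic e \<longleftrightarrow> (\<exists>p q. e = mmult (mvar p) (mvar q))"

lemma linear_quotient_order_var_times_witness: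
  assumes lq: "linear_quotient_order us" and quad: "\<forall>e\<in>set us. quadratic e"
    and "l \<le> k" "k < length us"
    and ne: "mmult (mvar a) (us ! k) \<noteq> mmult (mvar b) (us ! l)"
    and "mmult (mvar b) (us ! l) \<in> U"
    and earlier:
      "\<And>l'. l' < k \<Longrightarrow> mmult (mvar a) (us ! l') \<in> U \<and> mmult (mvar b) (us ! l') \<in> U"
  shows "\<exists>t. mmult (mvar a) (us ! k) t < mmult (mvar b) (us ! l) t \<and>
           mmult (mvar t) (mmult (mvar a) (us ! k)) \<in> mideal U"
proof (cases "l = k")
  case True
  then have "mmult (mvar a) (us ! k) b < mmult (mvar b) (us ! l) b"
    using ne by (auto simp: fun_eq_iff)
  moreover have "mdvd (mmult (mvar b) (us ! l)) (mmult (mvar b) (mmult (mvar a) (us ! k)))"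
    using True by (simp add: mdvd_def)
  ultimately show ?thesis
    using \<open>mmult (mvar b) (us ! l) \<in> U\<close> by (blast intro: mideal_upward_closed generator_in_mideal)
next
  case False
  with \<open>l \<le> k\<close> have "l < k" by simp
  with \<open>k < length us\<close> lq obtain t\<^sub>0 where
    "(us ! k) t\<^sub>0 < (us ! l) t\<^sub>0" "mmult (mvar t\<^sub>0) (us ! k) \<in> mideal (set (take k us))"
    unfolding linear_quotient_order_def by blast
  moreover from this(2) obtain l' where "l' < k" "mdvd (us ! l') (mmult (mvar t\<^sub>0) (us ! k))"
    using \<open>k < length us\<close> by (auto simp: mem_mideal_iff in_set_conv_nth)
  moreover obtain p q c d where
    "us ! k = mmult (mvar p) (mvar q)" "us ! l = mmult (mvar c) (mvar d)"
    using quad \<open>l \<le> k\<close> \<open>k < length us\<close> unfolding quadratic_def by (metis le_less_trans nth_mem)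
  ultimately show ?thesis
    using var_times_quadratic_witness[of p q t\<^sub>0 c d "us ! l'" a b U] ne earlier
      \<open>mmult (mvar b) (us ! l) \<in> U\<close> by metis
qed

lemma linear_quotient_order_var_times:
  assumes "finite A" and lq: "linear_quotient_order us" and quad: "\<forall>e\<in>set us. quadratic e"
  obtains ws where "distinct ws" "set ws = {mmult (mvar a) e | a e. a \<in> A \<and> e \<in> set us}"
    "linear_quotient_order ws"
proof -
  define G where "G = {mmult (mvar a) e | a e. a \<in> A \<and> e \<in> set us}"
  define f where "f g = (LEAST k. k < length us \<and> (\<exists>a\<in>A. g = mmult (mvar a) (us ! k)))" for g
  have f_rep: "f g < length us \<and> (\<exists>a\<in>A. g = mmult (mvar a) (us ! f g))" if "g \<in> G" for g
  proof -
    from that obtain k where "k < length us \<and> (\<exists>a\<in>A. g = mmult (mvar a) (us ! k))"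
      unfolding G_def by (auto simp: in_set_conv_nth)
    then show ?thesis unfolding f_def by (rule LeastI)
  qed
  have f_le: "f (mmult (mvar a) (us ! k)) \<le> k" if "a \<in> A" "k < length us" for a k
    unfolding f_def using that by (blast intro: Least_le)
  have "G = (\<lambda>(a, e). mmult (mvar a) e) ` (A \<times> set us)"
    unfolding G_def by auto
  then obtain xs where "distinct xs" "set xs = G"
    using \<open>finite A\<close> finite_distinct_list by (metis finite_SigmaI finite_imageI finite_set)
  define ws where "ws = sort_key f xs"
  have ws: "distinct ws" "set ws = G" "sorted (map f ws)"
    unfolding ws_def using \<open>distinct xs\<close> \<open>set xs = G\<close> by auto
  have "linear_quotient_order ws"
    unfolding linear_quotient_order_def
  proof (intro allI impI)
    fix i j assume "i < length ws" "j < i"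
    then have "ws ! i \<in> G" "ws ! j \<in> G" using ws(2) by auto
    then obtain a b where
      "a \<in> A" "ws ! i = mmult (mvar a) (us ! f (ws ! i))" "f (ws ! i) < length us"
      and "b \<in> A" "ws ! j = mmult (mvar b) (us ! f (ws ! j))"
      using f_rep by blast
    moreover have "f (ws ! j) \<le> f (ws ! i)"
      using sorted_nth_mono[OF ws(3), of j i] \<open>i < length ws\<close> \<open>j < i\<close> by simp
    moreover have "ws ! i \<noteq> ws ! j"
      using ws(1) \<open>i < length ws\<close> \<open>j < i\<close> by (simp add: nth_eq_iff_index_eq)
    moreover have "ws ! j \<in> set (take i ws)"
      using \<open>i < length ws\<close> \<open>j < i\<close> by (auto simp: in_set_conv_nth)
    moreover have "mmult (mvar a') (us ! l') \<in> set (take i ws)"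
      if "a' \<in> A" "l' < f (ws ! i)" for a' l'
    proof (rule sorted_key_in_set_take[OF ws(3) _ \<open>i < length ws\<close>])
      show "mmult (mvar a') (us ! l') \<in> set ws"
        using that \<open>f (ws ! i) < length us\<close> ws(2) unfolding G_def by fastforce
      show "f (mmult (mvar a') (us ! l')) < f (ws ! i)"
        using that f_le[of a' l'] \<open>f (ws ! i) < length us\<close> by simp
    qed
    ultimately show "\<exists>t. (ws ! i) t < (ws ! j) t \<and>
        mmult (mvar t) (ws ! i) \<in> mideal (set (take i ws))"
      using linear_quotient_order_var_times_witness[OF lq quad, of "f (ws ! j)" "f (ws ! i)" a b]
      by metis
  qed
  with ws(1,2) show thesis using that G_def by blast
qed

lemma mingens_edge_ideal:
  fixes E :: "'v::finite \<Rightarrow> 'v \<Rightarrow> bool"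
  shows "mingens (edge_ideal E) = {mmult (mvar i) (mvar j) | i j. E i j}"
  unfolding edge_ideal_def by (rule mingens_mideal_homogeneous[where d = 2]) auto

theorem lemma3p3:
  fixes E :: "'v::finite \<Rightarrow> 'v \<Rightarrow> bool" and A :: "'v set"
  assumes "\<And>i j. E i j \<Longrightarrow> E j i"
    and "\<And>i. \<not> E i i"
    and "linear_quotients (edge_ideal E)"
  shows "linear_quotients (mprod (mideal (mvar ` A)) (edge_ideal E))"
proof -
  obtain us where us: "set us = mingens (edge_ideal E)" "linear_quotient_order us"
    using assms(3) unfolding linear_quotients_iff by blast
  have edges: "set us = {mmult (mvar i) (mvar j) | i j. E i j}"
    using us(1) by (simp add: mingens_edge_ideal)
  then have quad: "\<forall>e\<in>set us. quadratic e"
    unfolding quadratic_def by blast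
  obtain ws where "distinct ws"
    and ws: "set ws = {mmult (mvar a) e | a e. a \<in> A \<and> e \<in> set us}"
    and "linear_quotient_order ws"
    by (rule linear_quotient_order_var_times[OF finite us(2) quad])
  have "edge_ideal E = mideal (set us)"
    by (simp add: edges edge_ideal_def)
  moreover have "{mmult u e | u e. u \<in> mvar ` A \<and> e \<in> set us} = set ws"
    unfolding ws by blast
  ultimately have "mprod (mideal (mvar ` A)) (edge_ideal E) = mideal (set ws)"
    by (simp add: mprod_mideal)
  moreover have "mingens (mideal (set ws)) = set ws"
    by (rule mingens_mideal_homogeneous[where d = 3]) (auto simp: ws edges)
  ultimately show ?thesis
    using \<open>distinct ws\<close> \<open>linear_quotient_order ws\<close> linear_quotients_iff by metis
qed

end
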